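(* Let $R$ be a hyperring. The topological space $X=\operatorname{Spec}R$ (with the Zariski topology) is disconnected if and only if $R$ has an element $e$ with $e^2=e$ and $e\notin\{0,1\}$.
   Context: A hyperoperation $+:H\times H\to\mathcal{P}^*(H)$ is extended to subsets by $A+B=\bigcup_{a\in A,b\in B}(a+b)$. A (canonical) hypergroup is a nonempty set with a commutative associative hyperoperation, a unique $0$ with $0+x=\{x\}$, unique inverses $-x$ with $0\in x+(-x)$, and reversibility $x\in y+z\iff z\in x+(-y)$; $x-y:=x+(-y)$. A hyperring $(R,+,\cdot,0,1)$ is a hypergroup $(R,+,0)$ with a commutative monoid $(R,\cdot,1)$ such that $x(y+z)=xy+xz$, $0x=0$, $0\neq1$. A hyperideal is a nonempty $I\subseteq R$ with $a-rb\subseteq I$ for $a,b\in I$, $r\in R$; it is prime if $I\neq R$ and $xy\in I\Rightarrow x\in I$ or $y\in I$. $\operatorname{Spec}R$ is the set of prime hyperideals, with the Zariski topology whose closed sets are exactly the sets $V(I)=\{\mathfrak{p}\in\operatorname{Spec}R\mid I\subseteq\mathfrak{p}\}$ for hyperideals $I$. *)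

theory Defs
  imports "HOL-Analysis.Abstract_Topology"
begin

text \<open>A hyperring is modelled on a type 'a (the carrier is UNIV), with a
hyperaddition add :: 'a => 'a => 'a set, a multiplication mul, and constants zero, one.\<close>

definition set_hadd :: "('a \<Rightarrow> 'a \<Rightarrow> 'a set) \<Rightarrow> 'a set \<Rightarrow> 'a set \<Rightarrow> 'a set" where
  "set_hadd add A B = (\<Union>a\<in>A. \<Union>b\<in>B. add a b)"

definition hneg :: "('a \<Rightarrow> 'a \<Rightarrow> 'a set) \<Rightarrow> 'a \<Rightarrow> 'a \<Rightarrow> 'a" where
  "hneg add zero x = (THE y. zero \<in> add x y)"

definition hypergroup :: "('a \<Rightarrow> 'a \<Rightarrow> 'a set) \<Rightarrow> 'a \<Rightarrow> bool" where
  "hypergroup add zero \<longleftrightarrow>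
     (\<forall>x y. add x y \<noteq> {}) \<and>
     (\<forall>x y. add x y = add y x) \<and>
     (\<forall>x y z. set_hadd add (add x y) {z} = set_hadd add {x} (add y z)) \<and>
     (\<forall>x. add zero x = {x}) \<and>
     (\<forall>z. (\<forall>x. add z x = {x}) \<longrightarrow> z = zero) \<and>
     (\<forall>x. \<exists>!y. zero \<in> add x y) \<and>
     (\<forall>x y z. x \<in> add y z \<longleftrightarrow> z \<in> add x (hneg add zero y))"

definition hyperring ::
  "('a \<Rightarrow> 'a \<Rightarrow> 'a set) \<Rightarrow> ('a \<Rightarrow> 'a \<Rightarrow> 'a) \<Rightarrow> 'a \<Rightarrow> 'a \<Rightarrow> bool" where
  "hyperring add mul zero one \<longleftrightarrow>
     hypergroup add zero \<and>
     (\<forall>x y z. mul (mul x y) z = mul x (mul y z)) \<and>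
     (\<forall>x y. mul x y = mul y x) \<and>
     (\<forall>x. mul one x = x) \<and>
     (\<forall>x y z. mul x ` add y z = add (mul x y) (mul x z)) \<and>
     (\<forall>x. mul zero x = zero) \<and>
     zero \<noteq> one"

definition hyperideal ::
  "('a \<Rightarrow> 'a \<Rightarrow> 'a set) \<Rightarrow> ('a \<Rightarrow> 'a \<Rightarrow> 'a) \<Rightarrow> 'a \<Rightarrow> 'a set \<Rightarrow> bool" where
  "hyperideal add mul zero I \<longleftrightarrow>
     I \<noteq> {} \<and> (\<forall>a\<in>I. \<forall>b\<in>I. \<forall>r. add a (hneg add zero (mul r b)) \<subseteq> I)"

definition prime_hyperideal ::
  "('a \<Rightarrow> 'a \<Rightarrow> 'a set) \<Rightarrow> ('a \<Rightarrow> 'a \<Rightarrow> 'a) \<Rightarrow> 'a \<Rightarrow> 'a set \<Rightarrow> bool" where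
  "prime_hyperideal add mul zero P \<longleftrightarrow>
     hyperideal add mul zero P \<and> P \<noteq> UNIV \<and>
     (\<forall>x y. mul x y \<in> P \<longrightarrow> x \<in> P \<or> y \<in> P)"

definition hSpec ::
  "('a \<Rightarrow> 'a \<Rightarrow> 'a set) \<Rightarrow> ('a \<Rightarrow> 'a \<Rightarrow> 'a) \<Rightarrow> 'a \<Rightarrow> 'a set set" where
  "hSpec add mul zero = {P. prime_hyperideal add mul zero P}"

definition hV ::
  "('a \<Rightarrow> 'a \<Rightarrow> 'a set) \<Rightarrow> ('a \<Rightarrow> 'a \<Rightarrow> 'a) \<Rightarrow> 'a \<Rightarrow> 'a set \<Rightarrow> 'a set set" where
  "hV add mul zero I = {P \<in> hSpec add mul zero. I \<subseteq> P}"

definition zariski ::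
  "('a \<Rightarrow> 'a \<Rightarrow> 'a set) \<Rightarrow> ('a \<Rightarrow> 'a \<Rightarrow> 'a) \<Rightarrow> 'a \<Rightarrow> 'a set topology" where
  "zariski add mul zero = topology (\<lambda>U. \<exists>I. hyperideal add mul zero I \<and>
       U = hSpec add mul zero - hV add mul zero I)"

end

theory Submission
  imports Defs
begin

text \<open>The open sets of Spec R are the complements of the V(I), so a disconnection amounts to two
  hyperideals I, J such that every prime contains exactly one of them. No prime contains both, so
  1 \<in> a + b for some a \<in> I, b \<in> J; every prime contains I or J, hence a b, so a b is nilpotent
  (a prime avoiding the powers of a non-nilpotent element exists by Zorn's lemma). With
  (a b)^n = 0, the same argument applied to a^n and b^n gives e \<in> I, f \<in> J with 1 \<in> e + f
  and e f = 0; then e = e 1 \<in> e e + e f = {e e}, so e is an idempotent different from 0 and 1.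
  Conversely an idempotent e has such a partner f \<in> 1 - e, and every prime contains exactly one
  of e and f, which splits Spec R into the two nonempty open sets Spec R - V(e), Spec R - V(f).\<close>

locale canonical_hyperring =
  fixes add :: "'a \<Rightarrow> 'a \<Rightarrow> 'a set" and mul :: "'a \<Rightarrow> 'a \<Rightarrow> 'a"
    and zero one :: 'a
  assumes hyperring: "hyperring add mul zero one"
begin

abbreviation neg :: "'a \<Rightarrow> 'a" where "neg \<equiv> hneg add zero"
abbreviation hprime :: "'a set \<Rightarrow> bool" where "hprime \<equiv> prime_hyperideal add mul zero"
abbreviation Spec :: "'a set set" where "Spec \<equiv> hSpec add mul zero"
abbreviation V :: "'a set \<Rightarrow> 'a set set" where "V \<equiv> hV add mul zero"

lemmas hyperring_axioms_unfolded = hyperring[unfolded hyperring_def hypergroup_def]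

lemma add_commute: "add x y = add y x"
  using hyperring_axioms_unfolded by (elim conjE) metis

lemma add_zero_left: "add zero x = {x}"
  using hyperring_axioms_unfolded by (elim conjE) metis

lemma add_zero_right: "add x zero = {x}"
  using add_zero_left add_commute by metis

lemma ex1_neg: "\<exists>!y. zero \<in> add x y"
  using hyperring_axioms_unfolded by (elim conjE) metis

lemma reversibility: "x \<in> add y z \<longleftrightarrow> z \<in> add x (neg y)"
  using hyperring_axioms_unfolded by (elim conjE) metis

lemma add_assoc_mem: "(\<exists>u\<in>add a b. w \<in> add u c) \<longleftrightarrow> (\<exists>v\<in>add b c. w \<in> add a v)"
proof -
  have "set_hadd add (add a b) {c} = set_hadd add {a} (add b c)"
    using hyperring_axioms_unfolded by (elim conjE) metis
  then show ?thesis
    unfolding set_hadd_def by blast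
qed

lemma zero_mem_add_neg: "zero \<in> add x (neg x)"
  unfolding hneg_def using theI'[OF ex1_neg] .

lemma neg_unique: "zero \<in> add x y \<Longrightarrow> y = neg x"
  unfolding hneg_def using the1_equality[OF ex1_neg] by metis

lemma neg_neg: "neg (neg x) = x"
  using neg_unique[of "neg x" x] zero_mem_add_neg[of x] add_commute by metis

lemma mul_assoc: "mul (mul x y) z = mul x (mul y z)"
  using hyperring_axioms_unfolded by (elim conjE) metis

lemma mul_commute: "mul x y = mul y x"
  using hyperring_axioms_unfolded by (elim conjE) metis

lemma mul_left_commute: "mul x (mul y z) = mul y (mul x z)"
  using mul_assoc mul_commute by metis

lemma mul_one_left: "mul one x = x"
  using hyperring_axioms_unfolded by (elim conjE) metis

lemma mul_one_right: "mul x one = x"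
  using mul_one_left mul_commute by metis

lemma distrib_left: "mul x ` add y z = add (mul x y) (mul x z)"
  using hyperring_axioms_unfolded by (elim conjE) metis

lemma mul_zero_left: "mul zero x = zero"
  using hyperring_axioms_unfolded by (elim conjE) metis

lemma mul_zero_right: "mul x zero = zero"
  using mul_zero_left mul_commute by metis

lemma zero_neq_one: "zero \<noteq> one"
  using hyperring_axioms_unfolded by (elim conjE) metis

lemma mul_mem_add: "z \<in> add y w \<Longrightarrow> mul x z \<in> add (mul x y) (mul x w)"
  using distrib_left by blast

lemma mul_neg: "mul x (neg y) = neg (mul x y)"
  using neg_unique mul_mem_add[OF zero_mem_add_neg[of y], where x=x] mul_zero_right by metis

definition hideal :: "'a set \<Rightarrow> bool" where
  "hideal I \<longleftrightarrow> zero \<in> I \<and> (\<forall>a\<in>I. \<forall>r. mul r a \<in> I) \<and> (\<forall>a\<in>I. \<forall>b\<in>I. add a b \<subseteq> I)"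

lemma hyperideal_iff_hideal: "hyperideal add mul zero I \<longleftrightarrow> hideal I"
proof
  assume H: "hyperideal add mul zero I"
  then obtain a where a: "a \<in> I" unfolding hyperideal_def by blast
  have closed: "add a (neg (mul r b)) \<subseteq> I" if "a \<in> I" "b \<in> I" for a b r
    using H that unfolding hyperideal_def by blast
  have zero: "zero \<in> I"
    using closed[OF a a, of one] zero_mem_add_neg[of a] mul_one_left[of a] by auto
  have neg_mul: "neg (mul r b) \<in> I" if "b \<in> I" for r b
    using closed[OF zero that, of r] add_zero_left by blast
  have "mul r b \<in> I" if "b \<in> I" for r b
    using neg_mul[OF neg_mul[OF that, of r], of one] mul_one_left neg_neg by metis
  moreover have "add a b \<subseteq> I" if "a \<in> I" "b \<in> I" for a b
    using closed[OF that(1) neg_mul[OF that(2), of one], of one] mul_one_left neg_neg by metis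
  ultimately show "hideal I"
    unfolding hideal_def using zero by blast
next
  assume H: "hideal I"
  have "neg (mul r b) \<in> I" if "b \<in> I" for r b
    using H that mul_neg[of "mul r b" one] mul_one_right mul_commute
    unfolding hideal_def by metis
  then show "hyperideal add mul zero I"
    using H unfolding hideal_def hyperideal_def by blast
qed

lemma hideal_zero: "hideal I \<Longrightarrow> zero \<in> I"
  unfolding hideal_def by blast

lemma hideal_mul_left: "hideal I \<Longrightarrow> a \<in> I \<Longrightarrow> mul r a \<in> I"
  unfolding hideal_def by blast

lemma hideal_mul_right: "hideal I \<Longrightarrow> a \<in> I \<Longrightarrow> mul a r \<in> I"
  using hideal_mul_left mul_commute by metis

lemma hideal_add: "hideal I \<Longrightarrow> a \<in> I \<Longrightarrow> b \<in> I \<Longrightarrow> z \<in> add a b \<Longrightarrow> z \<in> I"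
  unfolding hideal_def by blast

lemma hideal_one_iff: "hideal I \<Longrightarrow> one \<in> I \<longleftrightarrow> I = UNIV"
  using hideal_mul_left[of I one] mul_one_right by auto

lemma hideal_UNIV: "hideal UNIV"
  unfolding hideal_def by blast

lemma hideal_zero_set: "hideal {zero}"
  unfolding hideal_def using mul_zero_right add_zero_left by auto

lemma hideal_Inter: "(\<And>I. I \<in> F \<Longrightarrow> hideal I) \<Longrightarrow> hideal (\<Inter>F)"
  unfolding hideal_def by blast

lemma hideal_chain_Union:
  assumes "C \<noteq> {}" "\<And>I. I \<in> C \<Longrightarrow> hideal I" "subset.chain UNIV C"
  shows "hideal (\<Union>C)"
proof -
  have "add a b \<subseteq> \<Union>C" if "I \<in> C" "J \<in> C" "a \<in> I" "b \<in> J" for a b I J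
  proof -
    have "I \<subseteq> J \<or> J \<subseteq> I"
      using assms(3) that(1,2) unfolding subset_chain_def by blast
    then have "a \<in> I \<and> b \<in> I \<or> a \<in> J \<and> b \<in> J"
      using that(3,4) by blast
    then show ?thesis
      using that(1,2) assms(2) hideal_add by blast
  qed
  then show ?thesis
    using assms(1,2) unfolding hideal_def by blast
qed

lemma hideal_colon:
  assumes P: "hideal P"
  shows "hideal {z. mul z y \<in> P}"
proof -
  have "mul z y \<in> P" if "z \<in> add a b" "mul a y \<in> P" "mul b y \<in> P" for z a b
    using hideal_add[OF P _ _ mul_mem_add[OF that(1)], of y] that(2,3) by (simp add: mul_commute)
  moreover have "mul (mul r a) y \<in> P" if "mul a y \<in> P" for a r
    using hideal_mul_left[OF P that, of r] by (simp add: mul_assoc)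
  ultimately show ?thesis
    using hideal_zero[OF P] unfolding hideal_def by (auto simp: mul_zero_left)
qed

lemma hprime_iff:
  "hprime P \<longleftrightarrow> hideal P \<and> one \<notin> P \<and> (\<forall>x y. mul x y \<in> P \<longrightarrow> x \<in> P \<or> y \<in> P)"
  unfolding prime_hyperideal_def hyperideal_iff_hideal using hideal_one_iff by auto

lemma hprime_hideal: "hprime P \<Longrightarrow> hideal P"
  unfolding hprime_iff by blast

lemma hprime_one: "hprime P \<Longrightarrow> one \<notin> P"
  unfolding hprime_iff by blast

lemma hprime_mul: "hprime P \<Longrightarrow> mul x y \<in> P \<Longrightarrow> x \<in> P \<or> y \<in> P"
  unfolding hprime_iff by blast

lemma hprime_disjoint_if_maximal:
  assumes P: "hideal P" "P \<inter> S = {}" and S: "\<And>s t. s \<in> S \<Longrightarrow> t \<in> S \<Longrightarrow> mul s t \<in> S" "one \<in> S"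
    and maximal: "\<And>J. hideal J \<Longrightarrow> P \<subseteq> J \<Longrightarrow> J \<inter> S = {} \<Longrightarrow> J = P"
  shows "hprime P"
proof -
  have meets: "\<exists>s\<in>S. mul s y \<in> P" if "x \<notin> P" "mul x y \<in> P" for x y
  proof (rule ccontr)
    assume "\<not> (\<exists>s\<in>S. mul s y \<in> P)"
    then have "{z. mul z y \<in> P} \<inter> S = {}" by blast
    moreover have "P \<subseteq> {z. mul z y \<in> P}"
      using hideal_mul_right[OF P(1)] by blast
    ultimately have "{z. mul z y \<in> P} = P"
      using maximal hideal_colon[OF P(1)] by blast
    with that show False by blast
  qed
  have "x \<in> P \<or> y \<in> P" if xy: "mul x y \<in> P" for x y
  proof (rule ccontr)
    assume "\<not> (x \<in> P \<or> y \<in> P)"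
    then have "x \<notin> P" "y \<notin> P" by auto
    obtain s where s: "s \<in> S" "mul s y \<in> P"
      using meets[OF \<open>x \<notin> P\<close> xy] by blast
    then have "mul y s \<in> P"
      by (simp add: mul_commute)
    then obtain t where "t \<in> S" "mul t s \<in> P"
      using meets[OF \<open>y \<notin> P\<close>] by blast
    then show False
      using S(1)[OF _ s(1)] P(2) by blast
  qed
  then show ?thesis
    unfolding hprime_iff using P S(2) by blast
qed

lemma exists_hprime_disjoint:
  assumes I: "hideal I" "I \<inter> S = {}"
    and S: "\<And>s t. s \<in> S \<Longrightarrow> t \<in> S \<Longrightarrow> mul s t \<in> S" "one \<in> S"
  shows "\<exists>P. hprime P \<and> I \<subseteq> P \<and> P \<inter> S = {}"
proof -
  define A where "A = {J. hideal J \<and> I \<subseteq> J \<and> J \<inter> S = {}}"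
  have "\<Union>C \<in> A" if "C \<noteq> {}" "subset.chain A C" for C
  proof -
    have C: "C \<subseteq> A" "subset.chain UNIV C"
      using that(2) unfolding subset_chain_def by auto
    then have "hideal (\<Union>C)"
      using hideal_chain_Union[OF that(1)] unfolding A_def by blast
    moreover have "I \<subseteq> \<Union>C" "\<Union>C \<inter> S = {}"
      using that(1) C(1) unfolding A_def by blast+
    ultimately show ?thesis
      unfolding A_def by blast
  qed
  moreover have "A \<noteq> {}"
    using I unfolding A_def by blast
  ultimately obtain P where P: "P \<in> A" and maximal: "\<forall>J\<in>A. P \<subseteq> J \<longrightarrow> J = P"
    using subset_Zorn_nonempty[of A] by meson
  have "hprime P"
  proof (rule hprime_disjoint_if_maximal[OF _ _ S])
    show "hideal P" "P \<inter> S = {}"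
      using P unfolding A_def by auto
    show "J = P" if "hideal J" "P \<subseteq> J" "J \<inter> S = {}" for J
      using maximal P that unfolding A_def by blast
  qed
  with P show ?thesis
    unfolding A_def by blast
qed

definition hpow :: "'a \<Rightarrow> nat \<Rightarrow> 'a" where
  "hpow x n = (mul x ^^ n) one"

lemma hpow_0 [simp]: "hpow x 0 = one"
  by (simp add: hpow_def)

lemma hpow_Suc [simp]: "hpow x (Suc n) = mul x (hpow x n)"
  by (simp add: hpow_def)

lemma hpow_add: "mul (hpow x m) (hpow x n) = hpow x (m + n)"
  by (induction m) (simp_all add: mul_one_left mul_assoc)

lemma hpow_mul_distrib: "hpow (mul a b) n = mul (hpow a n) (hpow b n)"
  by (induction n) (simp_all add: mul_one_left mul_assoc mul_left_commute)

lemma hprime_hpow: "hprime P \<Longrightarrow> hpow x n \<in> P \<Longrightarrow> x \<in> P"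
  by (induction n) (auto simp: hprime_iff)

lemma hideal_hpow: "hideal I \<Longrightarrow> x \<in> I \<Longrightarrow> n \<noteq> 0 \<Longrightarrow> hpow x n \<in> I"
  by (cases n) (simp_all add: hideal_mul_right)

lemma nilpotent_if_mem_all_hprimes:
  assumes "\<And>P. hprime P \<Longrightarrow> x \<in> P"
  shows "\<exists>n. hpow x n = zero"
proof (rule ccontr)
  assume "\<not> (\<exists>n. hpow x n = zero)"
  then have "{zero} \<inter> range (hpow x) = {}" by auto
  moreover have "mul s t \<in> range (hpow x)" if "s \<in> range (hpow x)" "t \<in> range (hpow x)" for s t
    using that hpow_add by auto
  ultimately obtain P where "hprime P" "P \<inter> range (hpow x) = {}"
    using exists_hprime_disjoint[OF hideal_zero_set] hpow_0 by (metis rangeI)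
  moreover have "hpow x 1 = x"
    by (simp add: mul_one_right)
  ultimately show False
    using assms by (metis IntI empty_iff rangeI)
qed

definition principal :: "'a \<Rightarrow> 'a set" where
  "principal x = range (mul x)"

lemma hideal_principal: "hideal (principal x)"
proof -
  have "add (mul x s) (mul x t) \<subseteq> principal x" for s t
    using distrib_left[of x s t] unfolding principal_def by blast
  moreover have "mul r (mul x s) \<in> principal x" for r s
    using mul_left_commute unfolding principal_def by (metis rangeI)
  moreover have "zero \<in> principal x"
    unfolding principal_def using mul_zero_right by (metis rangeI)
  ultimately show ?thesis
    unfolding hideal_def principal_def by auto
qed

lemma mem_principal_self: "x \<in> principal x"
  unfolding principal_def using mul_one_right by (metis rangeI)

lemma principal_subset_iff: "hideal P \<Longrightarrow> principal x \<subseteq> P \<longleftrightarrow> x \<in> P"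
  using mem_principal_self hideal_mul_right unfolding principal_def by blast

definition hsum :: "'a set \<Rightarrow> 'a set \<Rightarrow> 'a set" where
  "hsum I J = {z. \<exists>a\<in>I. \<exists>b\<in>J. z \<in> add a b}"

lemma add_mem_rearrange:
  assumes "w \<in> add z1 z2" "z1 \<in> add a1 b1" "z2 \<in> add a2 b2"
  shows "\<exists>u\<in>add a1 a2. \<exists>t\<in>add b1 b2. w \<in> add u t"
proof -
  obtain v where v: "v \<in> add b1 z2" "w \<in> add a1 v"
    using add_assoc_mem[of a1 b1 w z2] assms(1,2) by blast
  then obtain t where t: "t \<in> add b2 b1" "v \<in> add a2 t"
    using add_assoc_mem[of a2 b2 v b1] assms(3) add_commute by blast
  then obtain u where "u \<in> add a1 a2" "w \<in> add u t"
    using add_assoc_mem[of a1 a2 w t] v by blast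
  then show ?thesis
    using t add_commute by metis
qed

lemma hideal_hsum:
  assumes I: "hideal I" and J: "hideal J"
  shows "hideal (hsum I J)"
proof -
  have "zero \<in> hsum I J"
    using hideal_zero[OF I] hideal_zero[OF J] add_zero_left unfolding hsum_def by auto
  moreover have "mul r z \<in> hsum I J" if "z \<in> hsum I J" for z r
    using that mul_mem_add hideal_mul_left[OF I] hideal_mul_left[OF J] unfolding hsum_def by blast
  moreover have "w \<in> hsum I J"
    if z: "z1 \<in> hsum I J" "z2 \<in> hsum I J" and w: "w \<in> add z1 z2" for z1 z2 w
  proof -
    obtain a1 b1 a2 b2 where "a1 \<in> I" "b1 \<in> J" "z1 \<in> add a1 b1" "a2 \<in> I" "b2 \<in> J" "z2 \<in> add a2 b2"
      using z unfolding hsum_def by blast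
    then show ?thesis
      using add_mem_rearrange[OF w] hideal_add[OF I] hideal_add[OF J]
      unfolding hsum_def by blast
  qed
  ultimately show ?thesis
    unfolding hideal_def by blast
qed

lemma one_mem_add_if_no_common_hprime:
  assumes I: "hideal I" and J: "hideal J"
    and no_common: "\<And>P. hprime P \<Longrightarrow> \<not> (I \<subseteq> P \<and> J \<subseteq> P)"
  shows "\<exists>a\<in>I. \<exists>b\<in>J. one \<in> add a b"
proof (rule ccontr)
  assume "\<not> ?thesis"
  then have "hsum I J \<inter> {one} = {}"
    unfolding hsum_def by blast
  then obtain P where "hprime P" "hsum I J \<subseteq> P"
    using exists_hprime_disjoint[OF hideal_hsum[OF I J], of "{one}"] mul_one_left by auto
  moreover have "I \<subseteq> hsum I J" "J \<subseteq> hsum I J"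
    using hideal_zero[OF I] hideal_zero[OF J] add_zero_left add_zero_right
    unfolding hsum_def by blast+
  ultimately show False
    using no_common by blast
qed

lemma mem_Spec: "P \<in> Spec \<longleftrightarrow> hprime P"
  unfolding hSpec_def by simp

lemma mem_V: "P \<in> V I \<longleftrightarrow> hprime P \<and> I \<subseteq> P"
  unfolding hV_def hSpec_def by simp

lemma hprime_Int_subset_iff:
  assumes "hprime P" "hideal I" "hideal J"
  shows "I \<inter> J \<subseteq> P \<longleftrightarrow> I \<subseteq> P \<or> J \<subseteq> P"
proof
  assume "I \<inter> J \<subseteq> P"
  show "I \<subseteq> P \<or> J \<subseteq> P"
  proof (rule ccontr)
    assume "\<not> (I \<subseteq> P \<or> J \<subseteq> P)"
    then obtain a b where "a \<in> I" "a \<notin> P" "b \<in> J" "b \<notin> P" by blast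
    moreover have "mul a b \<in> I \<inter> J"
      using \<open>a \<in> I\<close> \<open>b \<in> J\<close> hideal_mul_right[OF assms(2)] hideal_mul_left[OF assms(3)] by blast
    ultimately show False
      using \<open>I \<inter> J \<subseteq> P\<close> hprime_mul[OF assms(1)] by blast
  qed
qed blast

lemma Spec_diff_V_Int:
  assumes "hideal I" "hideal J"
  shows "(Spec - V I) \<inter> (Spec - V J) = Spec - V (I \<inter> J)"
  using assms hprime_Int_subset_iff by (auto simp: mem_Spec mem_V)

lemma Union_Spec_diff_V:
  assumes "\<forall>K\<in>F. \<exists>I. K = Spec - V I"
  shows "\<Union>F = Spec - V (\<Inter>(Spec - \<Union>F))"
proof (intro equalityI subsetI)
  fix P
  assume "P \<in> \<Union>F"
  then obtain K where "K \<in> F" "P \<in> K"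
    by blast
  moreover obtain I where "K = Spec - V I"
    using assms \<open>K \<in> F\<close> by blast
  ultimately have P: "P \<in> Spec - V I" and I: "Spec - V I \<in> F"
    by simp_all
  have "I \<subseteq> Q" if "Q \<in> Spec - \<Union>F" for Q
  proof -
    have "Q \<in> V I"
      using that I by blast
    then show ?thesis
      by (simp add: mem_V)
  qed
  then have "I \<subseteq> \<Inter>(Spec - \<Union>F)"
    by blast
  moreover have "\<not> I \<subseteq> P"
    using P by (simp add: mem_Spec mem_V)
  ultimately have "\<not> \<Inter>(Spec - \<Union>F) \<subseteq> P"
    by blast
  with P show "P \<in> Spec - V (\<Inter>(Spec - \<Union>F))"
    by (simp add: mem_V)
next
  fix P
  assume P: "P \<in> Spec - V (\<Inter>(Spec - \<Union>F))"
  show "P \<in> \<Union>F"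
  proof (rule ccontr)
    assume "P \<notin> \<Union>F"
    then have "\<Inter>(Spec - \<Union>F) \<subseteq> P"
      using P by blast
    with P show False
      by (simp add: mem_Spec mem_V)
  qed
qed

lemma istopology_zariski:
  "istopology (\<lambda>U. \<exists>I. hyperideal add mul zero I \<and> U = Spec - V I)"
  unfolding istopology_def hyperideal_iff_hideal
proof (intro conjI allI impI)
  fix U W
  assume "\<exists>I. hideal I \<and> U = Spec - V I" "\<exists>J. hideal J \<and> W = Spec - V J"
  then obtain I J where "hideal I" "hideal J" "U = Spec - V I" "W = Spec - V J"
    by blast
  moreover have "hideal (\<Inter>{I, J})"
    by (rule hideal_Inter) (use \<open>hideal I\<close> \<open>hideal J\<close> in blast)
  ultimately show "\<exists>K. hideal K \<and> U \<inter> W = Spec - V K"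
    using Spec_diff_V_Int by auto
next
  fix F
  assume F: "\<forall>K\<in>F. \<exists>I. hideal I \<and> K = Spec - V I"
  have "hideal (\<Inter>(Spec - \<Union>F))"
    by (rule hideal_Inter) (simp add: mem_Spec hprime_hideal)
  with F show "\<exists>K. hideal K \<and> \<Union>F = Spec - V K"
    using Union_Spec_diff_V[of F] by blast
qed

lemma openin_zariski: "openin (zariski add mul zero) U \<longleftrightarrow> (\<exists>I. hideal I \<and> U = Spec - V I)"
  unfolding zariski_def topology_inverse'[OF istopology_zariski] by (simp add: hyperideal_iff_hideal)

lemma topspace_zariski: "topspace (zariski add mul zero) = Spec"
proof -
  have "Spec - V UNIV = Spec"
    by (auto simp: mem_V dest!: hprime_one) blast
  then show ?thesis
    unfolding topspace_def openin_zariski using hideal_UNIV by blast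
qed

definition splits_Spec :: "'a set \<Rightarrow> 'a set \<Rightarrow> bool" where
  "splits_Spec I J \<longleftrightarrow> hideal I \<and> hideal J \<and> (\<forall>P. hprime P \<longrightarrow> (I \<subseteq> P \<longleftrightarrow> \<not> J \<subseteq> P)) \<and>
     (\<exists>P. hprime P \<and> \<not> I \<subseteq> P) \<and> (\<exists>P. hprime P \<and> \<not> J \<subseteq> P)"

lemma not_connected_zariski_iff:
  "\<not> connected_space (zariski add mul zero) \<longleftrightarrow> (\<exists>I J. splits_Spec I J)"
proof -
  have partition: "(Spec \<subseteq> (Spec - V I) \<union> (Spec - V J) \<and> (Spec - V I) \<inter> (Spec - V J) = {}) \<longleftrightarrow>
      (\<forall>P. hprime P \<longrightarrow> (I \<subseteq> P \<longleftrightarrow> \<not> J \<subseteq> P))" for I J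
    unfolding disjoint_iff by (auto simp: mem_Spec mem_V)
  have nonempty: "Spec - V I \<noteq> {} \<longleftrightarrow> (\<exists>P. hprime P \<and> \<not> I \<subseteq> P)" for I
    unfolding ex_in_conv[symmetric] by (simp add: mem_Spec mem_V) blast
  have "\<not> connected_space (zariski add mul zero) \<longleftrightarrow>
     (\<exists>I J. hideal I \<and> hideal J \<and>
        (Spec \<subseteq> (Spec - V I) \<union> (Spec - V J) \<and> (Spec - V I) \<inter> (Spec - V J) = {}) \<and>
        Spec - V I \<noteq> {} \<and> Spec - V J \<noteq> {})"
    (is "_ \<longleftrightarrow> (\<exists>I J. ?split I J)")
  proof
    assume "\<not> connected_space (zariski add mul zero)"
    then obtain E1 E2 where E: "openin (zariski add mul zero) E1" "openin (zariski add mul zero) E2"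
      "Spec \<subseteq> E1 \<union> E2" "E1 \<inter> E2 = {}" "E1 \<noteq> {}" "E2 \<noteq> {}"
      unfolding connected_space_def topspace_zariski by meson
    obtain I where "hideal I" "E1 = Spec - V I"
      using E(1) unfolding openin_zariski by blast
    moreover obtain J where "hideal J" "E2 = Spec - V J"
      using E(2) unfolding openin_zariski by blast
    ultimately have "?split I J"
      using E(3-6) by simp
    then show "\<exists>I J. ?split I J"
      by blast
  next
    assume "\<exists>I J. ?split I J"
    then obtain I J where "?split I J"
      by blast
    then show "\<not> connected_space (zariski add mul zero)"
      unfolding connected_space_def topspace_zariski not_not openin_zariski by blast
  qed
  then show ?thesis
    unfolding partition nonempty splits_Spec_def .
qed

definition complementary :: "'a \<Rightarrow> 'a \<Rightarrow> bool" where
  "complementary e f \<longleftrightarrow> one \<in> add e f \<and> mul e f = zero"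

lemma complementary_commute: "complementary e f \<Longrightarrow> complementary f e"
  unfolding complementary_def using add_commute mul_commute by metis

lemma complementary_idempotent:
  assumes "complementary e f"
  shows "mul e e = e"
proof -
  have "mul e one \<in> add (mul e e) (mul e f)"
    using assms mul_mem_add unfolding complementary_def by blast
  then show ?thesis
    using assms by (simp add: complementary_def mul_one_right add_zero_right)
qed

lemma idempotent_imp_ex_complementary:
  assumes "mul e e = e"
  shows "\<exists>f. complementary e f"
proof -
  have "mul e ` add one (neg e) = add e (neg e)"
    using distrib_left[of e one "neg e"] assms by (simp add: mul_one_right mul_neg)
  then obtain f where "f \<in> add one (neg e)" "mul e f = zero"
    using zero_mem_add_neg[of e] by (metis imageE)
  then show ?thesis
    unfolding complementary_def using reversibility by blast
qed

lemma hprime_complementary_mem_iff: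
  assumes "hprime P" "complementary e f"
  shows "e \<in> P \<longleftrightarrow> f \<notin> P"
proof -
  have "e \<in> P \<or> f \<in> P"
    using assms hprime_mul hideal_zero[OF hprime_hideal] unfolding complementary_def by metis
  moreover have "\<not> (e \<in> P \<and> f \<in> P)"
    using assms hideal_add[OF hprime_hideal] hprime_one unfolding complementary_def by blast
  ultimately show ?thesis
    by blast
qed

lemma idempotent_imp_ex_hprime_mem:
  assumes "mul e e = e" "e \<noteq> one"
  shows "\<exists>P. hprime P \<and> e \<in> P"
proof -
  have "mul e r \<noteq> one" for r
  proof
    assume "mul e r = one"
    then have "e = mul e (mul e r)"
      by (simp add: mul_one_right)
    also have "\<dots> = mul e r"
      by (simp add: mul_assoc[symmetric] assms(1))
    finally show False
      using \<open>mul e r = one\<close> assms(2) by simp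
  qed
  then have "principal e \<inter> {one} = {}"
    unfolding principal_def by blast
  then obtain P where "hprime P" "principal e \<subseteq> P"
    using exists_hprime_disjoint[OF hideal_principal[of e], of "{one}"] mul_one_left by auto
  then show ?thesis
    using mem_principal_self by blast
qed

lemma ex_complementary_if_each_hprime_contains_one:
  assumes I: "hideal I" and J: "hideal J"
    and exactly_one: "\<And>P. hprime P \<Longrightarrow> I \<subseteq> P \<longleftrightarrow> \<not> J \<subseteq> P"
  shows "\<exists>e\<in>I. \<exists>f\<in>J. complementary e f"
proof -
  have no_common: "\<not> (I \<subseteq> P \<and> J \<subseteq> P)" and cover: "I \<subseteq> P \<or> J \<subseteq> P" if "hprime P" for P
    using exactly_one[OF that] by blast+
  obtain a b where ab: "a \<in> I" "b \<in> J" "one \<in> add a b"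
    using one_mem_add_if_no_common_hprime[OF I J no_common] by blast
  have "mul a b \<in> P" if "hprime P" for P
    using cover[OF that] ab(1,2) hideal_mul_left hideal_mul_right hprime_hideal[OF that] by blast
  then obtain n where n: "hpow (mul a b) n = zero"
    using nilpotent_if_mem_all_hprimes by blast
  have "n \<noteq> 0"
    using n zero_neq_one by (metis hpow_0)
  define A B where "A = hpow a n" and "B = hpow b n"
  have "A \<in> I" "B \<in> J"
    unfolding A_def B_def using hideal_hpow I J ab(1,2) \<open>n \<noteq> 0\<close> by blast+
  have "\<not> (principal A \<subseteq> P \<and> principal B \<subseteq> P)" if P: "hprime P" for P
  proof
    assume "principal A \<subseteq> P \<and> principal B \<subseteq> P"
    then have "a \<in> P" "b \<in> P"
      using hprime_hpow[OF P] principal_subset_iff[OF hprime_hideal[OF P]]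
      unfolding A_def B_def by blast+
    then show False
      using hideal_add[OF hprime_hideal[OF P] _ _ ab(3)] hprime_one[OF P] by blast
  qed
  then obtain e f where ef: "e \<in> principal A" "f \<in> principal B" "one \<in> add e f"
    using one_mem_add_if_no_common_hprime[OF hideal_principal hideal_principal] by blast
  then obtain r t where "e = mul A r" "f = mul B t"
    unfolding principal_def by blast
  then have "mul e f = mul (mul A B) (mul r t)"
    by (simp add: mul_assoc mul_left_commute[of r B])
  then have "mul e f = zero"
    using n by (simp add: A_def B_def hpow_mul_distrib mul_zero_left)
  moreover have "e \<in> I" "f \<in> J"
    using ef(1,2) \<open>A \<in> I\<close> \<open>B \<in> J\<close> principal_subset_iff I J by blast+
  ultimately show ?thesis
    using ef(3) unfolding complementary_def by blast
qed

lemma nontrivial_idempotent_if_not_connected_zariski: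
  assumes "\<not> connected_space (zariski add mul zero)"
  shows "\<exists>e. mul e e = e \<and> e \<noteq> zero \<and> e \<noteq> one"
proof -
  obtain I J where "splits_Spec I J"
    using assms not_connected_zariski_iff by blast
  then have I: "hideal I" and J: "hideal J"
    and exactly_one: "\<And>P. hprime P \<Longrightarrow> I \<subseteq> P \<longleftrightarrow> \<not> J \<subseteq> P"
    and "\<exists>P. hprime P \<and> \<not> I \<subseteq> P" "\<exists>P. hprime P \<and> \<not> J \<subseteq> P"
    unfolding splits_Spec_def by blast+
  then have "one \<notin> I" "one \<notin> J"
    using hprime_one by blast+
  obtain e f where "e \<in> I" "f \<in> J" and ef: "complementary e f"
    using ex_complementary_if_each_hprime_contains_one[OF I J exactly_one] by blast
  have "e \<noteq> zero"
  proof
    assume "e = zero"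
    then have "f = one"
      using ef add_zero_left unfolding complementary_def by simp
    with \<open>f \<in> J\<close> \<open>one \<notin> J\<close> show False
      by simp
  qed
  moreover have "e \<noteq> one"
    using \<open>e \<in> I\<close> \<open>one \<notin> I\<close> by blast
  ultimately show ?thesis
    using complementary_idempotent[OF ef] by blast
qed

lemma not_connected_zariski_if_complementary:
  assumes ef: "complementary e f" and "e \<noteq> one" "f \<noteq> one"
  shows "\<not> connected_space (zariski add mul zero)"
proof -
  obtain P where P: "hprime P" "e \<in> P"
    using idempotent_imp_ex_hprime_mem complementary_idempotent[OF ef] \<open>e \<noteq> one\<close> by blast
  obtain Q where Q: "hprime Q" "f \<in> Q"
    using idempotent_imp_ex_hprime_mem complementary_idempotent[OF complementary_commute[OF ef]]
      \<open>f \<noteq> one\<close> by blast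
  have "principal e \<subseteq> R \<longleftrightarrow> e \<in> R" "principal f \<subseteq> R \<longleftrightarrow> e \<notin> R" if "hprime R" for R
    using principal_subset_iff[OF hprime_hideal[OF that]] hprime_complementary_mem_iff[OF that ef]
    by simp_all
  with P Q have "splits_Spec (principal e) (principal f)"
    unfolding splits_Spec_def using hideal_principal hprime_complementary_mem_iff[OF Q(1) ef] by auto
  then show ?thesis
    unfolding not_connected_zariski_iff by blast
qed

theorem not_connected_zariski_iff_nontrivial_idempotent:
  "\<not> connected_space (zariski add mul zero) \<longleftrightarrow> (\<exists>e. mul e e = e \<and> e \<noteq> zero \<and> e \<noteq> one)"
proof
  assume "\<not> connected_space (zariski add mul zero)"
  then show "\<exists>e. mul e e = e \<and> e \<noteq> zero \<and> e \<noteq> one"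
    by (rule nontrivial_idempotent_if_not_connected_zariski)
next
  assume "\<exists>e. mul e e = e \<and> e \<noteq> zero \<and> e \<noteq> one"
  then obtain e where e: "mul e e = e" "e \<noteq> zero" "e \<noteq> one"
    by blast
  then obtain f where ef: "complementary e f"
    using idempotent_imp_ex_complementary by blast
  moreover have "f \<noteq> one"
    using ef e(2) unfolding complementary_def by (metis mul_one_right)
  ultimately show "\<not> connected_space (zariski add mul zero)"
    using not_connected_zariski_if_complementary e(3) by blast
qed

end

theorem proposition3p22:
  fixes add :: "'a \<Rightarrow> 'a \<Rightarrow> 'a set" and mul :: "'a \<Rightarrow> 'a \<Rightarrow> 'a"
    and zero one :: 'a
  assumes "hyperring add mul zero one"
  shows "\<not> connected_space (zariski add mul zero) \<longleftrightarrow>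
           (\<exists>e. mul e e = e \<and> e \<noteq> zero \<and> e \<noteq> one)"
  using canonical_hyperring.not_connected_zariski_iff_nontrivial_idempotent[OF canonical_hyperring.intro[OF assms]] .

end
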